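(* Let $T\ge 1$ and $n_w\ge 0$ be integers, let $C>0$, and let $q_1,\dots,q_T\in\mathbb{R}$. For $\mathbf{u}=(u_1,\dots,u_T)\in\mathbb{R}^T$ and $i=1,\dots,T$ write $\mathbf{u}_i=(u_{i-n_w},\dots,u_i)$, where entries with index $\le 0$ are fixed constants (not decision variables). Let $J_i:\mathbb{R}\to\mathbb{R}$ ($i=1,\dots,T$) be continuously differentiable and increasing, and let $f_i:\mathbb{R}^{n_w+1}\to\mathbb{R}$ ($i=1,\dots,T$) be continuously differentiable and non-decreasing in each of their arguments. Define the penalty function $$\hat J(\mathbf{u})=\sum_{i=1}^T\Big(J_i(u_i)+C\big(f_i(\mathbf{u}_i)-q_i\big)^2\Big)$$ on $\mathbb{R}^T$. Then at any (unconstrained, local) minimum $\mathbf{u}^*$ of $\hat J$, at least one of the inequality constraints $f_i(\mathbf{u}^*_i)-q_i\ge 0$, $i=1,\dots,T$, is violated.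
   Context: "Increasing" for a differentiable function means its derivative is strictly positive; "non-decreasing" means all its partial derivatives are non-negative. The penalty function arises from the constrained problem $\min J(\mathbf{u})=\sum_i J_i(u_i)$ subject to $f_i(\mathbf{u}_i)\ge q_i$, $i=1,\dots,T$. *)

theory Defs
  imports "HOL-Analysis.Analysis"
begin

definition ext_seq :: "(int \<Rightarrow> real) \<Rightarrow> (nat \<Rightarrow> real) \<Rightarrow> int \<Rightarrow> real" where
  "ext_seq c u k = (if k \<le> 0 then c k else u (nat k))"

text \<open>The window u_i = (u_{i-n_w}, ..., u_i) as a vector in R^{n_w+1}; the coordinates
  of the index type 'w are labelled 0..n_w by the bijection idx, coordinate with
  label m holding u_{i-n_w+m}.\<close>
definition window :: "('w::finite \<Rightarrow> nat) \<Rightarrow> nat \<Rightarrow> (int \<Rightarrow> real) \<Rightarrow> (nat \<Rightarrow> real) \<Rightarrow> nat \<Rightarrow> real ^ 'w" where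
  "window idx n_w c u i = (\<chi> w. ext_seq c u (int i - int n_w + int (idx w)))"

definition Jhat :: "nat \<Rightarrow> real \<Rightarrow> (nat \<Rightarrow> real \<Rightarrow> real) \<Rightarrow> (nat \<Rightarrow> real ^ 'w \<Rightarrow> real)
     \<Rightarrow> (nat \<Rightarrow> real) \<Rightarrow> ('w::finite \<Rightarrow> nat) \<Rightarrow> nat \<Rightarrow> (int \<Rightarrow> real) \<Rightarrow> (nat \<Rightarrow> real) \<Rightarrow> real" where
  "Jhat T C J f q idx n_w c u =
     (\<Sum>i=1..T. J i (u i) + C * (f i (window idx n_w c u i) - q i)^2)"

definition local_min_T :: "nat \<Rightarrow> ((nat \<Rightarrow> real) \<Rightarrow> real) \<Rightarrow> (nat \<Rightarrow> real) \<Rightarrow> bool" where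
  "local_min_T T F u \<longleftrightarrow> (\<exists>e>0. \<forall>v. (\<forall>j\<in>{1..T}. \<bar>v j - u j\<bar> < e) \<longrightarrow> F u \<le> F v)"

end

theory Submission
  imports Defs
begin

text \<open>Suppose every constraint holds at a local minimum \<open>u\<close>. The last decision variable
  \<open>u\<^sub>T\<close> occurs only in the last summand of the penalty: as the argument of \<open>J\<^sub>T\<close> and as
  the last entry of the window \<open>(u\<^sub>T\<^sub>-\<^sub>n\<^sub>w, \<dots>, u\<^sub>T)\<close>. Decreasing it therefore changes the
  penalty at rate \<open>-(J\<^sub>T'(u\<^sub>T) + 2C (f\<^sub>T - q\<^sub>T) \<partial>f\<^sub>T)\<close>, where \<open>\<partial>f\<^sub>T\<close> is the partial
  derivative in that last entry. This rate is negative because \<open>J\<^sub>T' > 0\<close>, \<open>f\<^sub>T \<ge> q\<^sub>T\<close> and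
  \<open>\<partial>f\<^sub>T \<ge> 0\<close>, contradicting stationarity at a local minimum.\<close>

lemma window_fun_upd_later:
  assumes "\<And>w. idx w \<le> n_w" and "i < j"
  shows "window idx n_w c (u(j := s)) i = window idx n_w c u i"
proof -
  have "int i - int n_w + int (idx w) \<noteq> int j" for w
    using assms(1)[of w] assms(2) by auto
  then show ?thesis
    by (auto simp: window_def ext_seq_def vec_eq_iff nat_eq_iff)
qed

lemma window_fun_upd_self:
  assumes "inj idx" and "idx w\<^sub>0 = n_w" and "j \<ge> 1"
  shows "window idx n_w c (u(j := u j - t)) j = window idx n_w c u j - t *\<^sub>R axis w\<^sub>0 1"
proof -
  have "window idx n_w c (u(j := u j - t)) j $ w = (window idx n_w c u j - t *\<^sub>R axis w\<^sub>0 1) $ w"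
    for w
  proof (cases "w = w\<^sub>0")
    case True
    show ?thesis
      using assms(3) unfolding True by (simp add: assms(2) window_def ext_seq_def axis_def)
  next
    case False
    with assms(1,2) have "idx w \<noteq> n_w" by (auto dest: injD)
    with False show ?thesis by (auto simp: window_def ext_seq_def axis_def nat_eq_iff)
  qed
  then show ?thesis by (simp add: vec_eq_iff)
qed

lemma Jhat_fun_upd_last:
  assumes idx: "bij_betw idx UNIV {..n_w}" and "idx w\<^sub>0 = n_w" and T: "T \<ge> 1"
  shows "Jhat T C J f q idx n_w c (u(T := u T - t)) =
           Jhat (T - 1) C J f q idx n_w c u
         + (J T (u T - t) + C * (f T (window idx n_w c u T - t *\<^sub>R axis w\<^sub>0 1) - q T)^2)"
proof -
  have "\<And>w. idx w \<le> n_w" using idx by (auto simp: bij_betw_def)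
  then have earlier: "window idx n_w c (u(T := u T - t)) i = window idx n_w c u i"
    if "i \<in> {1..T - 1}" for i
    using that T by (intro window_fun_upd_later) auto
  have last: "window idx n_w c (u(T := u T - t)) T = window idx n_w c u T - t *\<^sub>R axis w\<^sub>0 1"
    using assms by (intro window_fun_upd_self) (auto simp: bij_betw_def)
  have "(\<Sum>i=1..T - 1. J i ((u(T := u T - t)) i)
          + C * (f i (window idx n_w c (u(T := u T - t)) i) - q i)^2)
        = Jhat (T - 1) C J f q idx n_w c u"
    unfolding Jhat_def by (rule sum.cong) (auto simp: earlier)
  moreover have "{1..T} = insert T {1..T - 1}" using T by auto
  ultimately show ?thesis
    unfolding Jhat_def using T by (simp add: last add.commute)
qed

lemma penalty_term_has_real_derivative:
  assumes "(J has_real_derivative J'u) (at u)" and "(f has_derivative f'x) (at x)"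
  shows "((\<lambda>t. J (u - t) + C * (f (x - t *\<^sub>R a) - q)^2)
           has_real_derivative - (J'u + 2 * C * (f x - q) * f'x a)) (at 0)"
proof -
  have "((\<lambda>t. u - t) has_real_derivative -1) (at 0)"
    by (auto intro!: derivative_eq_intros)
  then have J_comp: "((\<lambda>t. J (u - t)) has_real_derivative J'u * -1) (at 0)"
    by (rule DERIV_chain2[where g = "\<lambda>t. u - t", rotated]) (simp add: assms(1))
  have "((\<lambda>t. x - t *\<^sub>R a) has_derivative (\<lambda>h. - (h *\<^sub>R a))) (at 0)"
    by (auto intro!: derivative_eq_intros)
  from has_derivative_compose[OF this, of f f'x]
  have "((\<lambda>t. f (x - t *\<^sub>R a)) has_derivative (\<lambda>h. f'x (- (h *\<^sub>R a)))) (at 0)"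
    using assms(2) by simp
  moreover have "(\<lambda>h. f'x (- (h *\<^sub>R a))) = (*) (- f'x a)"
    using has_derivative_linear[OF assms(2)] by (auto simp: linear_cmul linear_neg)
  ultimately have f_comp: "((\<lambda>t. f (x - t *\<^sub>R a)) has_real_derivative - f'x a) (at 0)"
    unfolding has_field_derivative_def by metis
  have "((\<lambda>t. J (u - t) + C * (f (x - t *\<^sub>R a) - q)^2)
           has_real_derivative J'u * -1 + C * (2 * (f x - q) * - f'x a)) (at 0)"
    using J_comp f_comp by (auto intro!: derivative_eq_intros)
  then show ?thesis by (simp add: algebra_simps)
qed

theorem proposition2:
  fixes T n_w :: nat and C :: real and q :: "nat \<Rightarrow> real"
    and J :: "nat \<Rightarrow> real \<Rightarrow> real" and J' :: "nat \<Rightarrow> real \<Rightarrow> real"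
    and f :: "nat \<Rightarrow> real ^ 'w::finite \<Rightarrow> real"
    and f' :: "nat \<Rightarrow> real ^ 'w \<Rightarrow> real ^ 'w \<Rightarrow> real"
    and idx :: "'w \<Rightarrow> nat" and c :: "int \<Rightarrow> real" and u :: "nat \<Rightarrow> real"
  assumes T: "T \<ge> 1" and Cpos: "C > 0"
    and idx: "bij_betw idx UNIV {..n_w}"
    and J_deriv: "\<And>i x. i \<in> {1..T} \<Longrightarrow> (J i has_real_derivative J' i x) (at x)"
    and J'_cont: "\<And>i. i \<in> {1..T} \<Longrightarrow> continuous_on UNIV (J' i)"
    and J_incr: "\<And>i x. i \<in> {1..T} \<Longrightarrow> J' i x > 0"
    and f_deriv: "\<And>i x. i \<in> {1..T} \<Longrightarrow> (f i has_derivative f' i x) (at x)"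
    and f'_cont: "\<And>i v. i \<in> {1..T} \<Longrightarrow> continuous_on UNIV (\<lambda>x. f' i x v)"
    and f_nondec: "\<And>i x k. i \<in> {1..T} \<Longrightarrow> f' i x (axis k 1) \<ge> 0"
    and min: "local_min_T T (Jhat T C J f q idx n_w c) u"
  shows "\<exists>i\<in>{1..T}. f i (window idx n_w c u i) - q i < 0"
proof (rule ccontr)
  assume "\<not> ?thesis"
  moreover have T_mem: "T \<in> {1..T}" using T by simp
  ultimately have feasible: "f T (window idx n_w c u T) \<ge> q T" by force
  obtain w\<^sub>0 where w\<^sub>0: "idx w\<^sub>0 = n_w"
    using idx by (metis atMost_iff bij_betw_iff_bijections order_refl)
  define x where "x = window idx n_w c u T"
  define D where "D = - (J' T (u T) + 2 * C * (f T x - q T) * f' T x (axis w\<^sub>0 1))"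
  define H where "H t = Jhat T C J f q idx n_w c (u(T := u T - t))" for t
  have "(H has_real_derivative 0 + D) (at 0)"
    unfolding H_def Jhat_fun_upd_last[OF idx w\<^sub>0 T] D_def x_def
    by (intro DERIV_add DERIV_const penalty_term_has_real_derivative J_deriv f_deriv T_mem)
  moreover obtain e where "e > 0" and "\<forall>t. \<bar>0 - t\<bar> < e \<longrightarrow> H 0 \<le> H t"
    using min by (fastforce simp: local_min_T_def H_def)
  ultimately have "0 + D = 0" by (rule DERIV_local_min)
  moreover have "D < 0"
  proof -
    have "0 \<le> 2 * C * (f T x - q T) * f' T x (axis w\<^sub>0 1)"
      using Cpos feasible f_nondec[OF T_mem] by (simp add: x_def)
    with J_incr[OF T_mem, of "u T"] show ?thesis unfolding D_def by linarith
  qed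
  ultimately show False by simp
qed

end
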